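(* Let $(\mathsf{M},g)$ be either an $n$-dimensional smooth closed Riemannian manifold or $(\mathbb{R}^n,g_n)$, and let $w\in BC^r(\mathsf{M})$ with $r\in(0,1]$; if $\mathsf{M}=\mathbb{R}^n$ assume moreover there is a constant $w_\infty>0$ such that $\|w-w_\infty\|_{L_\infty(\mathbb{R}^n\setminus\mathbb{B}(0,\widetilde R))}\to0$ as $\widetilde R\to\infty$. Let $\widetilde\omega:\mathbb{R}\to[0,1]$ be smooth, nonincreasing, equal to $1$ on $[0,1/2]$ and $0$ on $[3/4,\infty)$. For $R>0$ and points $\mathsf p_j\in\mathsf{M}$ define $$w_{j,R}(\mathsf p)=\widetilde\omega\Big(\tfrac{d(\mathsf p,\mathsf p_j)}{2R}\Big)w(\mathsf p)+\Big(1-\widetilde\omega\Big(\tfrac{d(\mathsf p,\mathsf p_j)}{2R}\Big)\Big)w(\mathsf p_j),$$ and, when $\mathsf{M}=\mathbb{R}^n$, for $\widetilde R>0$, $$w_{0,\widetilde R}(\mathsf p)=\Big(1-\widetilde\omega\Big(\tfrac{d(\mathsf p,0)}{2\widetilde R}\Big)\Big)w(\mathsf p)+\widetilde\omega\Big(\tfrac{d(\mathsf p,0)}{2\widetilde R}\Big)w_\infty.$$ Then for any $\alpha\in[0,r)$ and $\varepsilon>0$ there exists $R_0>0$ such that for every $R\in(0,R_0)$ and every finite family of points $\mathsf p_1,\dots,\mathsf p_N\in\mathsf{M}$ (in particular the centers of a finite cover of $\mathsf{M}$, resp. of $\overline{\mathbb{B}(0,\widetilde R)}$, by geodesic balls of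 radius $R$) one has $\|w_{j,R}-w(\mathsf p_j)\|_{\alpha,\infty}<\varepsilon$ for each $j\in\{1,\dots,N\}$. In addition, if $\mathsf{M}=\mathbb{R}^n$, there exists $\widehat R>0$ such that $\|w_{0,\widetilde R}-w_\infty\|_{\alpha,\infty}<\varepsilon$ whenever $\widetilde R>\widehat R$.
   Context: $d$ denotes geodesic distance. For $\alpha\in(0,1)$, $\|u\|_{\alpha,\infty}=\|u\|_\infty+\sup_{\mathsf p\ne\mathsf q}|u(\mathsf p)-u(\mathsf q)|/d(\mathsf p,\mathsf q)^\alpha$ and $BC^\alpha(\mathsf{M})$ is the space where this is finite; $\|u\|_{0,\infty}=\|u\|_\infty$; $BC^1(\mathsf{M})$ consists of bounded $C^1$ functions with bounded gradient. *)

theory Defs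
  imports "HOL-Analysis.Analysis"
begin

definition smooth_real :: "(real \<Rightarrow> real) \<Rightarrow> bool" where
  "smooth_real f \<longleftrightarrow> (\<exists>D :: nat \<Rightarrow> real \<Rightarrow> real. D 0 = f \<and>
      (\<forall>k x. (D k has_real_derivative D (Suc k) x) (at x)))"

definition sup_norm :: "('m \<Rightarrow> real) \<Rightarrow> ereal" where
  "sup_norm u = (SUP p. ereal \<bar>u p\<bar>)"

definition hoelder_seminorm :: "real \<Rightarrow> ('m::metric_space \<Rightarrow> real) \<Rightarrow> ereal" where
  "hoelder_seminorm \<alpha> u =
     Sup ({0} \<union> {ereal (\<bar>u p - u q\<bar> / dist p q powr \<alpha>) | p q. p \<noteq> q})"

definition hoelder_norm :: "real \<Rightarrow> ('m::metric_space \<Rightarrow> real) \<Rightarrow> ereal" where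
  "hoelder_norm \<alpha> u = (if \<alpha> = 0 then sup_norm u else sup_norm u + hoelder_seminorm \<alpha> u)"

definition BC1 :: "('a::real_normed_vector \<Rightarrow> real) \<Rightarrow> bool" where
  "BC1 u \<longleftrightarrow> bounded (range u) \<and>
     (\<exists>u' :: 'a \<Rightarrow> ('a \<Rightarrow>\<^sub>L real). (\<forall>x. (u has_derivative blinfun_apply (u' x)) (at x))
        \<and> continuous_on UNIV u' \<and> bounded (range u'))"

definition BC_eucl :: "real \<Rightarrow> ('a::euclidean_space \<Rightarrow> real) \<Rightarrow> bool" where
  "BC_eucl r u \<longleftrightarrow> (if r < 1 then hoelder_norm r u < \<infinity> else BC1 u)"

definition cutoff_profile :: "(real \<Rightarrow> real) \<Rightarrow> bool" where
  "cutoff_profile \<omega> \<longleftrightarrow> smooth_real \<omega> \<and> (\<forall>t. 0 \<le> \<omega> t \<and> \<omega> t \<le> 1) \<and> antimono \<omega> \<and>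
     (\<forall>t\<in>{0..1/2}. \<omega> t = 1) \<and> (\<forall>t\<ge>3/4. \<omega> t = 0)"

definition w_loc :: "(real \<Rightarrow> real) \<Rightarrow> ('m::metric_space \<Rightarrow> real) \<Rightarrow> real \<Rightarrow> 'm \<Rightarrow> 'm \<Rightarrow> real" where
  "w_loc \<omega> w R pj p = \<omega> (dist p pj / (2 * R)) * w p + (1 - \<omega> (dist p pj / (2 * R))) * w pj"

definition w_far :: "(real \<Rightarrow> real) \<Rightarrow> ('a::real_normed_vector \<Rightarrow> real) \<Rightarrow> real \<Rightarrow> real \<Rightarrow> 'a \<Rightarrow> real" where
  "w_far \<omega> w winf R p = (1 - \<omega> (dist p 0 / (2 * R))) * w p + \<omega> (dist p 0 / (2 * R)) * winf"

end

theory Submission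
  imports Defs
begin

(* Both w_{j,R} - w(p_j) and w_{0,R} - w_inf are products phi * g of a radial cutoff
   0 <= phi <= 1 with a function g that is r-Hoelder with the constant of w.  On the support
   of phi the factor g is uniformly small: |w - w(p_j)| <= C (3R/2)^r on the ball of radius 3R/2,
   resp. |w - w_inf| is small outside the ball of radius R by the decay assumption.  Hence the sup
   norm of phi * g is small, while its r-Hoelder constant stays bounded: the cutoff has Hoelder
   constant of order R^(-r), which is compensated by the size R^r of g on its support.  The
   interpolation inequality [f]_alpha <= K^(alpha/r) (2 |f|_inf)^(1 - alpha/r) then makes the
   alpha-norm small. *)

lemma sup_norm_leI: "(\<And>p. \<bar>u p\<bar> \<le> S) \<Longrightarrow> sup_norm u \<le> ereal S"
  unfolding sup_norm_def by (auto intro!: SUP_least)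

lemma abs_le_sup_norm: "ereal \<bar>u p\<bar> \<le> sup_norm u"
  unfolding sup_norm_def by (rule SUP_upper) auto

lemma sup_norm_nonneg: "0 \<le> sup_norm u"
  using abs_le_sup_norm[of u undefined] by (simp add: order_trans[rotated])

lemma hoelder_seminorm_leI:
  assumes "0 \<le> K" "\<And>p q. p \<noteq> q \<Longrightarrow> \<bar>u p - u q\<bar> \<le> K * dist p q powr \<alpha>"
  shows "hoelder_seminorm \<alpha> u \<le> ereal K"
  unfolding hoelder_seminorm_def using assms by (auto intro!: Sup_least simp: divide_le_eq)

lemma hoelder_seminorm_nonneg: "0 \<le> hoelder_seminorm \<alpha> u"
  unfolding hoelder_seminorm_def by (rule Sup_upper) auto

lemma abs_diff_le_hoelder_seminorm:
  "p \<noteq> q \<Longrightarrow> ereal (\<bar>u p - u q\<bar> / dist p q powr \<alpha>) \<le> hoelder_seminorm \<alpha> u"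
  unfolding hoelder_seminorm_def by (rule Sup_upper) auto

lemma hoelder_norm_finiteE:
  fixes w :: "'m::metric_space \<Rightarrow> real"
  assumes "hoelder_norm r w < \<infinity>" "0 < r"
  obtains B C where "\<And>p. \<bar>w p\<bar> \<le> B" "0 \<le> C" "\<And>p q. \<bar>w p - w q\<bar> \<le> C * dist p q powr r"
proof -
  have "sup_norm w + hoelder_seminorm r w < \<infinity>"
    using assms by (simp add: hoelder_norm_def)
  then obtain B C where B: "sup_norm w = ereal B" and C: "hoelder_seminorm r w = ereal C"
    using sup_norm_nonneg[of w] hoelder_seminorm_nonneg[of r w]
    by (cases "sup_norm w"; cases "hoelder_seminorm r w") auto
  have "\<bar>w p\<bar> \<le> B" for p
    using abs_le_sup_norm[of w p] B by simp
  moreover have "\<bar>w p - w q\<bar> \<le> C * dist p q powr r" for p q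
  proof (cases "p = q")
    case False
    then show ?thesis
      using abs_diff_le_hoelder_seminorm[OF False, of w r] C by (simp add: divide_le_eq)
  qed simp
  moreover have "0 \<le> C"
    using hoelder_seminorm_nonneg[of r w] C by simp
  ultimately show ?thesis
    using that by blast
qed

lemma BC_eucl_imp_hoelder_norm_finite:
  fixes w :: "'a::euclidean_space \<Rightarrow> real"
  assumes "BC_eucl r w" "0 < r" "r \<le> 1"
  shows "hoelder_norm r w < \<infinity>"
proof (cases "r < 1")
  case True
  then show ?thesis using assms by (simp add: BC_eucl_def)
next
  case False
  then have r: "r = 1" and "BC1 w"
    using assms by (auto simp: BC_eucl_def)
  then obtain w' :: "'a \<Rightarrow> ('a \<Rightarrow>\<^sub>L real)"
    where w': "\<And>x. (w has_derivative blinfun_apply (w' x)) (at x)"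
      and "bounded (range w')" "bounded (range w)"
    unfolding BC1_def by blast
  then obtain B M where B: "\<And>x. \<bar>w x\<bar> \<le> B" and M: "\<And>x. norm (w' x) \<le> M"
    unfolding bounded_iff by auto
  have "\<bar>w x - w y\<bar> \<le> M * dist x y" for x y
    using differentiable_bound[of UNIV w "\<lambda>x. blinfun_apply (w' x)" M x y] w' M
    by (simp add: dist_norm norm_blinfun.rep_eq[symmetric] has_derivative_at_withinI)
  moreover have "0 \<le> M"
    using M[of 0] norm_ge_zero order_trans by blast
  ultimately have "hoelder_seminorm 1 w \<le> ereal M"
    by (intro hoelder_seminorm_leI) auto
  moreover have "sup_norm w \<le> ereal B"
    using B by (rule sup_norm_leI)
  ultimately have "hoelder_norm r w \<le> ereal (B + M)"
    using r by (simp add: hoelder_norm_def add_mono flip: plus_ereal.simps)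
  then show ?thesis
    using order.strict_trans1 by fastforce
qed

lemma le_powr_geometric_mean:
  fixes D A B \<theta> :: real
  assumes "0 \<le> D" "D \<le> A" "D \<le> B" "0 \<le> \<theta>" "\<theta> \<le> 1"
  shows "D \<le> B powr \<theta> * A powr (1 - \<theta>)"
proof (cases "D = 0")
  case False
  then have "D = D powr \<theta> * D powr (1 - \<theta>)"
    using assms(1) by (simp flip: powr_add)
  also have "\<dots> \<le> B powr \<theta> * A powr (1 - \<theta>)"
    using assms by (intro mult_mono powr_mono2) auto
  finally show ?thesis .
qed simp

lemma hoelder_norm_interpolation:
  fixes f :: "'m::metric_space \<Rightarrow> real"
  assumes "0 \<le> \<alpha>" "\<alpha> < r" "0 \<le> S" "0 \<le> K"
    and sup: "\<And>p. \<bar>f p\<bar> \<le> S"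
    and hoelder: "\<And>p q. \<bar>f p - f q\<bar> \<le> K * dist p q powr r"
  shows "hoelder_norm \<alpha> f \<le> ereal (S + K powr (\<alpha>/r) * (2*S) powr (1 - \<alpha>/r))"
proof -
  let ?\<theta> = "\<alpha>/r"
  have \<theta>: "0 \<le> ?\<theta>" "?\<theta> \<le> 1"
    using assms by auto
  have "\<bar>f p - f q\<bar> \<le> K powr ?\<theta> * (2*S) powr (1 - ?\<theta>) * dist p q powr \<alpha>" for p q
  proof -
    have "\<bar>f p - f q\<bar> \<le> (K * dist p q powr r) powr ?\<theta> * (2*S) powr (1 - ?\<theta>)"
      using sup[of p] sup[of q] hoelder[of p q] \<theta> by (intro le_powr_geometric_mean) auto
    also have "(K * dist p q powr r) powr ?\<theta> = K powr ?\<theta> * dist p q powr \<alpha>"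
      using assms by (simp add: powr_mult powr_powr)
    finally show ?thesis
      by (simp add: mult_ac)
  qed
  then have "hoelder_seminorm \<alpha> f \<le> ereal (K powr ?\<theta> * (2*S) powr (1 - ?\<theta>))"
    by (intro hoelder_seminorm_leI) auto
  moreover have "sup_norm f \<le> ereal S"
    using sup by (rule sup_norm_leI)
  ultimately show ?thesis
  proof (cases "\<alpha> = 0")
    case True
    then show ?thesis
      using \<open>sup_norm f \<le> ereal S\<close> by (simp add: hoelder_norm_def order_trans)
  next
    case False
    then show ?thesis
      using add_mono[OF \<open>sup_norm f \<le> ereal S\<close> \<open>hoelder_seminorm \<alpha> f \<le> _\<close>]
      by (simp add: hoelder_norm_def)
  qed
qed

lemma hoelder_norm_less_if_sup_small:
  assumes "0 \<le> \<alpha>" "\<alpha> < r" "0 \<le> K" "0 < \<epsilon>"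
  obtains \<eta> where "0 < \<eta>"
    "\<And>(f :: 'm::metric_space \<Rightarrow> real) S. \<lbrakk>0 \<le> S; S < \<eta>; \<And>p. \<bar>f p\<bar> \<le> S;
        \<And>p q. \<bar>f p - f q\<bar> \<le> K * dist p q powr r\<rbrakk> \<Longrightarrow> hoelder_norm \<alpha> f < ereal \<epsilon>"
proof -
  let ?bound = "\<lambda>S::real. S + K powr (\<alpha>/r) * (2*S) powr (1 - \<alpha>/r)"
  have "((\<lambda>S::real. (2*S) powr (1 - \<alpha>/r)) \<longlongrightarrow> 0) (at_right 0)"
    using assms eventually_at_right_less[of 0]
    by (intro tendsto_zero_powrI[where f = "\<lambda>S. 2*S"] tendsto_eq_intros)
       (auto elim: eventually_mono)
  then have "(?bound \<longlongrightarrow> 0 + K powr (\<alpha>/r) * 0) (at_right 0)"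
    by (intro tendsto_intros)
  then have "\<forall>\<^sub>F S in at_right 0. ?bound S < \<epsilon>"
    using assms(4) by (auto dest: order_tendstoD(2))
  then obtain \<eta> where "0 < \<eta>" and \<eta>: "\<And>S. 0 < S \<Longrightarrow> S < \<eta> \<Longrightarrow> ?bound S < \<epsilon>"
    unfolding eventually_at_right[OF zero_less_one] by auto
  show ?thesis
  proof (rule that[OF \<open>0 < \<eta>\<close>])
    fix f :: "'m \<Rightarrow> real" and S
    assume S: "0 \<le> S" "S < \<eta>" and "\<And>p. \<bar>f p\<bar> \<le> S" "\<And>p q. \<bar>f p - f q\<bar> \<le> K * dist p q powr r"
    then have "hoelder_norm \<alpha> f \<le> ereal (?bound S)"
      using assms by (intro hoelder_norm_interpolation) auto
    also have "\<dots> < ereal \<epsilon>"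
      using \<eta>[of S] S assms by (cases "S = 0") auto
    finally show "hoelder_norm \<alpha> f < ereal \<epsilon>" .
  qed
qed

lemma cutoff_profile_lipschitz:
  assumes "cutoff_profile \<omega>"
  obtains L where "0 \<le> L" "\<And>s t. 0 \<le> s \<Longrightarrow> 0 \<le> t \<Longrightarrow> \<bar>\<omega> s - \<omega> t\<bar> \<le> L * \<bar>s - t\<bar>"
proof -
  obtain D where D: "D 0 = \<omega>" "\<And>k x. (D k has_real_derivative D (Suc k) x) (at x)"
    using assms unfolding cutoff_profile_def smooth_real_def by blast
  have "continuous_on {0..1} (D 1)"
    using D(2) by (intro continuous_at_imp_continuous_on) (auto intro: DERIV_isCont)
  then have "bounded (D 1 ` {0..1})"
    by (intro compact_imp_bounded compact_continuous_image) auto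
  then obtain L where L: "\<And>x. x \<in> {0..1} \<Longrightarrow> \<bar>D 1 x\<bar> \<le> L"
    by (metis bounded_iff imageI real_norm_def)
  have lip01: "\<bar>\<omega> s - \<omega> t\<bar> \<le> L * \<bar>s - t\<bar>" if "s \<in> {0..1}" "t \<in> {0..1}" for s t
    using field_differentiable_bound[of "{0..1}" "D 0" "D 1" L s t] D L that
    by (auto intro: has_field_derivative_at_within)
  have clamp: "\<omega> s = \<omega> (min s 1)" if "0 \<le> s" for s
    using assms by (cases "s \<le> 1") (auto simp: cutoff_profile_def)
  show ?thesis
  proof (rule that)
    show "0 \<le> L"
      using L[of 0] by simp
    fix s t :: real
    assume "0 \<le> s" "0 \<le> t"
    then have "\<bar>\<omega> s - \<omega> t\<bar> \<le> L * \<bar>min s 1 - min t 1\<bar>"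
      using lip01[of "min s 1" "min t 1"] clamp[of s] clamp[of t] by simp
    also have "\<dots> \<le> L * \<bar>s - t\<bar>"
      using \<open>0 \<le> L\<close> by (intro mult_left_mono) (auto simp: min_def)
    finally show "\<bar>\<omega> s - \<omega> t\<bar> \<le> L * \<bar>s - t\<bar>" .
  qed
qed

lemma min_one_le_powr:
  fixes x r :: real
  assumes "0 \<le> x" "0 < r" "r \<le> 1"
  shows "min 1 x \<le> x powr r"
proof (cases "x \<le> 1")
  case True
  then have "x powr 1 \<le> x powr r"
    using assms by (intro powr_mono') auto
  then show ?thesis
    using assms by simp
next
  case False
  then show ?thesis
    using assms by (simp add: ge_one_powr_ge_zero)
qed

lemma cutoff_profile_radial_hoelder:
  assumes "cutoff_profile \<omega>" "0 < r" "r \<le> 1"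
  obtains L where "0 \<le> L"
    "\<And>(c :: 'm::metric_space) \<rho> p q. 0 < \<rho> \<Longrightarrow>
       \<bar>\<omega> (dist p c / \<rho>) - \<omega> (dist q c / \<rho>)\<bar> \<le> (L / \<rho>) powr r * dist p q powr r"
proof -
  obtain L where L: "0 \<le> L" "\<And>s t. 0 \<le> s \<Longrightarrow> 0 \<le> t \<Longrightarrow> \<bar>\<omega> s - \<omega> t\<bar> \<le> L * \<bar>s - t\<bar>"
    using cutoff_profile_lipschitz[OF assms(1)] by blast
  have "\<bar>\<omega> (dist p c / \<rho>) - \<omega> (dist q c / \<rho>)\<bar> \<le> (L / \<rho>) powr r * dist p q powr r"
    if "0 < \<rho>" for c :: 'm and \<rho> p q
  proof -
    have "\<bar>dist p c - dist q c\<bar> \<le> dist p q"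
      by (metis abs_le_iff dist_commute dist_triangle2 dist_triangle3 diff_le_eq minus_diff_eq)
    then have "\<bar>dist p c / \<rho> - dist q c / \<rho>\<bar> \<le> dist p q / \<rho>"
      using that by (simp add: divide_right_mono flip: diff_divide_distrib)
    then have "\<bar>\<omega> (dist p c / \<rho>) - \<omega> (dist q c / \<rho>)\<bar> \<le> L * (dist p q / \<rho>)"
      using L that by (meson order_trans mult_left_mono zero_le_dist divide_nonneg_pos)
    moreover have "\<bar>\<omega> (dist p c / \<rho>) - \<omega> (dist q c / \<rho>)\<bar> \<le> 1"
      using assms(1) unfolding cutoff_profile_def by (smt (verit))
    ultimately have "\<bar>\<omega> (dist p c / \<rho>) - \<omega> (dist q c / \<rho>)\<bar> \<le> min 1 (L / \<rho> * dist p q)"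
      by (simp add: mult.commute)
    also have "\<dots> \<le> (L / \<rho> * dist p q) powr r"
      using L(1) that assms by (intro min_one_le_powr) auto
    also have "\<dots> = (L / \<rho>) powr r * dist p q powr r"
      using L(1) that by (simp add: powr_mult del: times_divide_eq_left)
    finally show ?thesis .
  qed
  with L(1) show ?thesis
    using that by blast
qed

lemma cutoff_product_abs_le:
  fixes \<phi> g :: real
  assumes "0 \<le> \<phi>" "\<phi> \<le> 1" "\<phi> \<noteq> 0 \<Longrightarrow> \<bar>g\<bar> \<le> G" "0 \<le> G"
  shows "\<bar>\<phi> * g\<bar> \<le> G"
  using assms by (cases "\<phi> = 0") (auto simp: abs_mult intro: order_trans[OF mult_left_le_one_le])

lemma cutoff_product_hoelder:
  fixes \<phi> g :: "'m::metric_space \<Rightarrow> real"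
  assumes \<phi>: "\<And>p. 0 \<le> \<phi> p" "\<And>p. \<phi> p \<le> 1"
    and \<phi>_hoelder: "\<And>p q. \<bar>\<phi> p - \<phi> q\<bar> \<le> \<Lambda> * dist p q powr r"
    and g_hoelder: "\<And>p q. \<bar>g p - g q\<bar> \<le> C * dist p q powr r"
    and g_bound: "\<And>p. \<phi> p \<noteq> 0 \<Longrightarrow> \<bar>g p\<bar> \<le> G"
    and "0 \<le> \<Lambda>" "0 \<le> C" "0 \<le> G"
  shows "\<bar>\<phi> p * g p - \<phi> q * g q\<bar> \<le> (C + G * \<Lambda>) * dist p q powr r"
proof -
  have *: "\<bar>\<phi> p * g p - \<phi> q * g q\<bar> \<le> (C + G * \<Lambda>) * dist p q powr r" if "\<phi> q \<noteq> 0" for p q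
  proof -
    have "\<phi> p * g p - \<phi> q * g q = \<phi> p * (g p - g q) + g q * (\<phi> p - \<phi> q)"
      by algebra
    then have "\<bar>\<phi> p * g p - \<phi> q * g q\<bar> \<le> \<phi> p * \<bar>g p - g q\<bar> + \<bar>g q\<bar> * \<bar>\<phi> p - \<phi> q\<bar>"
      using \<phi>(1)[of p] by (metis abs_mult abs_of_nonneg abs_triangle_ineq)
    also have "\<dots> \<le> 1 * (C * dist p q powr r) + G * (\<Lambda> * dist p q powr r)"
      using \<phi>[of p] g_bound[OF that] by (intro add_mono mult_mono g_hoelder \<phi>_hoelder) auto
    finally show ?thesis
      by (simp add: algebra_simps)
  qed
  consider "\<phi> q \<noteq> 0" | "\<phi> p \<noteq> 0" | "\<phi> p = 0" "\<phi> q = 0"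
    by blast
  then show ?thesis
  proof cases
    case 2
    then show ?thesis
      using *[of p q] by (simp add: abs_minus_commute dist_commute)
  qed (use * assms in simp_all)
qed

lemma eventually_hoelder_norm_w_loc_less:
  fixes w :: "'m::metric_space \<Rightarrow> real"
  assumes \<omega>: "cutoff_profile \<omega>" and r: "0 < r" "r \<le> 1" and w: "hoelder_norm r w < \<infinity>"
    and \<alpha>: "0 \<le> \<alpha>" "\<alpha> < r" and "0 < \<epsilon>"
  shows "\<forall>\<^sub>F R in at_right 0. \<forall>c. hoelder_norm \<alpha> (\<lambda>p. w_loc \<omega> w R c p - w c) < ereal \<epsilon>"
proof -
  obtain C where C: "0 \<le> C" "\<And>p q. \<bar>w p - w q\<bar> \<le> C * dist p q powr r"
    using hoelder_norm_finiteE[OF w r(1)] by metis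
  obtain L where L: "0 \<le> L"
    "\<And>(c::'m) \<rho> p q. 0 < \<rho> \<Longrightarrow>
       \<bar>\<omega> (dist p c / \<rho>) - \<omega> (dist q c / \<rho>)\<bar> \<le> (L / \<rho>) powr r * dist p q powr r"
    using cutoff_profile_radial_hoelder[OF \<omega> r] by metis
  define K where "K = C + C * (3/4 * L) powr r"
  have "0 \<le> K"
    using C(1) by (simp add: K_def)
  obtain \<eta> where "0 < \<eta>" and \<eta>:
    "\<And>(f :: 'm \<Rightarrow> real) S. \<lbrakk>0 \<le> S; S < \<eta>; \<And>p. \<bar>f p\<bar> \<le> S;
        \<And>p q. \<bar>f p - f q\<bar> \<le> K * dist p q powr r\<rbrakk> \<Longrightarrow> hoelder_norm \<alpha> f < ereal \<epsilon>"
    by (rule hoelder_norm_less_if_sup_small[OF \<alpha> \<open>0 \<le> K\<close> \<open>0 < \<epsilon>\<close>]) blast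
  have "((\<lambda>R. C * (3/2 * R) powr r) \<longlongrightarrow> C * 0) (at_right 0)"
    using r eventually_at_right_less[of 0]
    by (intro tendsto_intros tendsto_zero_powrI[where f = "\<lambda>R. 3/2 * R"] tendsto_eq_intros)
       (auto elim: eventually_mono)
  then have "\<forall>\<^sub>F R in at_right 0. C * (3/2 * R) powr r < \<eta>"
    using \<open>0 < \<eta>\<close> by (auto dest: order_tendstoD(2))
  with eventually_at_right_less[of 0]
  show ?thesis
  proof (eventually_elim, intro allI)
    fix R :: real and c :: 'm
    assume R: "0 < R" and small: "C * (3/2 * R) powr r < \<eta>"
    define \<phi> where "\<phi> p = \<omega> (dist p c / (2*R))" for p
    define G where "G = C * (3/2 * R) powr r"
    have "0 \<le> G"
      using C(1) by (simp add: G_def)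
    have \<phi>01: "0 \<le> \<phi> p" "\<phi> p \<le> 1" for p
      using \<omega> by (auto simp: \<phi>_def cutoff_profile_def)
    have g_bound: "\<bar>w p - w c\<bar> \<le> G" if "\<phi> p \<noteq> 0" for p
    proof -
      have "dist p c < 3/2 * R"
      proof (rule ccontr)
        assume "\<not> dist p c < 3/2 * R"
        then have "3/4 \<le> dist p c / (2*R)"
          using R by (simp add: field_simps)
        then show False
          using that \<omega> by (simp add: \<phi>_def cutoff_profile_def)
      qed
      then show ?thesis
        using C r unfolding G_def by (meson order_trans less_imp_le mult_left_mono powr_mono2 zero_le_dist)
    qed
    have GL: "G * (L / (2*R)) powr r = C * (3/4 * L) powr r"
      using R L(1) by (simp add: G_def mult.assoc flip: powr_mult)
    have "\<bar>\<phi> p * (w p - w c) - \<phi> q * (w q - w c)\<bar> \<le> (C + G * (L / (2*R)) powr r) * dist p q powr r"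
      for p q
      using \<phi>01 L(2)[where \<rho> = "2*R" and c = c] R C g_bound \<open>0 \<le> G\<close>
      by (intro cutoff_product_hoelder[where g = "\<lambda>p. w p - w c"]) (auto simp: \<phi>_def)
    then have "\<bar>\<phi> p * (w p - w c) - \<phi> q * (w q - w c)\<bar> \<le> K * dist p q powr r" for p q
      unfolding GL K_def .
    moreover have "\<bar>\<phi> p * (w p - w c)\<bar> \<le> G" for p
      using \<phi>01[of p] g_bound[of p] \<open>0 \<le> G\<close> by (rule cutoff_product_abs_le)
    moreover have "w_loc \<omega> w R c p - w c = \<phi> p * (w p - w c)" for p
      by (simp add: w_loc_def \<phi>_def algebra_simps)
    ultimately show "hoelder_norm \<alpha> (\<lambda>p. w_loc \<omega> w R c p - w c) < ereal \<epsilon>"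
      using \<eta>[of G] small C(1) by (simp add: G_def)
  qed
qed

lemma eventually_hoelder_norm_w_far_less:
  fixes w :: "'a::real_normed_vector \<Rightarrow> real"
  assumes \<omega>: "cutoff_profile \<omega>" and r: "0 < r" "r \<le> 1" and w: "hoelder_norm r w < \<infinity>"
    and \<alpha>: "0 \<le> \<alpha>" "\<alpha> < r" and "0 < \<epsilon>"
    and tail: "((\<lambda>Rt. sup_norm (\<lambda>p. if p \<in> ball 0 Rt then 0 else w p - winf)) \<longlongrightarrow> 0) at_top"
  shows "\<forall>\<^sub>F Rt in at_top. hoelder_norm \<alpha> (\<lambda>p. w_far \<omega> w winf Rt p - winf) < ereal \<epsilon>"
proof -
  obtain B C where B: "\<And>p. \<bar>w p\<bar> \<le> B" and C: "0 \<le> C" "\<And>p q. \<bar>w p - w q\<bar> \<le> C * dist p q powr r"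
    using hoelder_norm_finiteE[OF w r(1)] by metis
  obtain L where L: "0 \<le> L"
    "\<And>(c::'a) \<rho> p q. 0 < \<rho> \<Longrightarrow>
       \<bar>\<omega> (dist p c / \<rho>) - \<omega> (dist q c / \<rho>)\<bar> \<le> (L / \<rho>) powr r * dist p q powr r"
    using cutoff_profile_radial_hoelder[OF \<omega> r] by metis
  define G where "G = B + \<bar>winf\<bar>"
  have G: "\<bar>w p - winf\<bar> \<le> G" for p
    using B[of p] by (simp add: G_def)
  then have "0 \<le> G"
    by (meson abs_ge_zero order_trans)
  define K where "K = C + G * (L/2) powr r"
  have "0 \<le> K"
    using C(1) \<open>0 \<le> G\<close> by (simp add: K_def)
  obtain \<eta> where "0 < \<eta>" and \<eta>:
    "\<And>(f :: 'a \<Rightarrow> real) S. \<lbrakk>0 \<le> S; S < \<eta>; \<And>p. \<bar>f p\<bar> \<le> S;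
        \<And>p q. \<bar>f p - f q\<bar> \<le> K * dist p q powr r\<rbrakk> \<Longrightarrow> hoelder_norm \<alpha> f < ereal \<epsilon>"
    by (rule hoelder_norm_less_if_sup_small[OF \<alpha> \<open>0 \<le> K\<close> \<open>0 < \<epsilon>\<close>]) blast
  have "\<forall>\<^sub>F Rt in at_top. sup_norm (\<lambda>p. if p \<in> ball 0 Rt then 0 else w p - winf) < ereal (\<eta>/2)"
    using \<open>0 < \<eta>\<close> by (intro order_tendstoD(2)[OF tail]) simp
  with eventually_ge_at_top[of 1]
  show ?thesis
  proof eventually_elim
    fix Rt :: real
    assume Rt: "1 \<le> Rt" and small: "sup_norm (\<lambda>p. if p \<in> ball 0 Rt then 0 else w p - winf) < ereal (\<eta>/2)"
    define \<psi> where "\<psi> p = 1 - \<omega> (dist p 0 / (2*Rt))" for p :: 'a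
    have \<psi>01: "0 \<le> \<psi> p" "\<psi> p \<le> 1" for p
      using \<omega> by (auto simp: \<psi>_def cutoff_profile_def)
    have \<psi>_hoelder: "\<bar>\<psi> p - \<psi> q\<bar> \<le> (L/2) powr r * dist p q powr r" for p q
    proof -
      have "\<bar>\<psi> p - \<psi> q\<bar> \<le> (L / (2*Rt)) powr r * dist p q powr r"
        using L(2)[where \<rho> = "2*Rt" and c = 0 and p = q and q = p] Rt
        by (simp add: \<psi>_def abs_minus_commute dist_commute)
      also have "\<dots> \<le> (L/2) powr r * dist p q powr r"
        using Rt L(1) r by (intro mult_right_mono powr_mono2 divide_left_mono) auto
      finally show ?thesis .
    qed
    have tail_bound: "\<bar>w p - winf\<bar> \<le> \<eta>/2" if "\<psi> p \<noteq> 0" for p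
    proof -
      have "0 \<le> dist p 0 / (2*Rt)"
        using Rt by simp
      with that \<omega> have "\<not> dist p 0 / (2*Rt) \<le> 1/2"
        by (auto simp: \<psi>_def cutoff_profile_def)
      then have "p \<notin> ball 0 Rt"
        using Rt by (simp add: dist_commute field_simps)
      then have "ereal \<bar>w p - winf\<bar> \<le> sup_norm (\<lambda>p. if p \<in> ball 0 Rt then 0 else w p - winf)"
        using abs_le_sup_norm[of "\<lambda>p. if p \<in> ball 0 Rt then 0 else w p - winf" p] by simp
      with small have "ereal \<bar>w p - winf\<bar> < ereal (\<eta>/2)"
        by (rule order.strict_trans1[rotated])
      then show ?thesis
        by simp
    qed
    have "\<bar>\<psi> p * (w p - winf) - \<psi> q * (w q - winf)\<bar> \<le> K * dist p q powr r" for p q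
      unfolding K_def using \<psi>01 \<psi>_hoelder C G L(1) \<open>0 \<le> G\<close>
      by (intro cutoff_product_hoelder[where g = "\<lambda>p. w p - winf"]) auto
    moreover have "\<bar>\<psi> p * (w p - winf)\<bar> \<le> \<eta>/2" for p
      using \<psi>01[of p] tail_bound[of p] \<open>0 < \<eta>\<close> by (intro cutoff_product_abs_le) auto
    moreover have "w_far \<omega> w winf Rt p - winf = \<psi> p * (w p - winf)" for p
      by (simp add: w_far_def \<psi>_def algebra_simps)
    ultimately show "hoelder_norm \<alpha> (\<lambda>p. w_far \<omega> w winf Rt p - winf) < ereal \<epsilon>"
      using \<eta>[of "\<eta>/2"] \<open>0 < \<eta>\<close> by simp
  qed
qed

theorem lemma5p1:
  fixes \<omega> :: "real \<Rightarrow> real"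
  assumes om: "cutoff_profile \<omega>"
  shows
   "(\<forall>(w :: 'm::metric_space \<Rightarrow> real) r.
       compact (UNIV :: 'm set) \<and> r \<in> {0<..1} \<and> hoelder_norm r w < \<infinity> \<longrightarrow>
       (\<forall>\<alpha> \<in> {0..<r}. \<forall>\<epsilon>>0. \<exists>R0>0. \<forall>R\<in>{0<..<R0}. \<forall>(N::nat) (ps :: nat \<Rightarrow> 'm).
          \<forall>j\<in>{1..N}. hoelder_norm \<alpha> (\<lambda>p. w_loc \<omega> w R (ps j) p - w (ps j)) < ereal \<epsilon>))
  \<and> (\<forall>(w :: 'a::euclidean_space \<Rightarrow> real) r winf.
       r \<in> {0<..1} \<and> BC_eucl r w \<and> winf > 0 \<and>
       ((\<lambda>Rt. sup_norm (\<lambda>p. if p \<in> ball 0 Rt then 0 else w p - winf)) \<longlongrightarrow> 0) at_top \<longrightarrow>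
       (\<forall>\<alpha> \<in> {0..<r}. \<forall>\<epsilon>>0.
          (\<exists>R0>0. \<forall>R\<in>{0<..<R0}. \<forall>(N::nat) (ps :: nat \<Rightarrow> 'a).
             \<forall>j\<in>{1..N}. hoelder_norm \<alpha> (\<lambda>p. w_loc \<omega> w R (ps j) p - w (ps j)) < ereal \<epsilon>)
          \<and> (\<exists>Rh>0. \<forall>Rt>Rh. hoelder_norm \<alpha> (\<lambda>p. w_far \<omega> w winf Rt p - winf) < ereal \<epsilon>)))"
proof (intro conjI allI impI ballI)
  fix w :: "'m \<Rightarrow> real" and r \<alpha> \<epsilon> :: real
  assume "compact (UNIV :: 'm set) \<and> r \<in> {0<..1} \<and> hoelder_norm r w < \<infinity>" "\<alpha> \<in> {0..<r}" "0 < \<epsilon>"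
  then have "\<forall>\<^sub>F R in at_right 0. \<forall>c. hoelder_norm \<alpha> (\<lambda>p. w_loc \<omega> w R c p - w c) < ereal \<epsilon>"
    by (intro eventually_hoelder_norm_w_loc_less[OF om, of r w \<alpha> \<epsilon>]) auto
  then show "\<exists>R0>0. \<forall>R\<in>{0<..<R0}. \<forall>(N::nat) (ps :: nat \<Rightarrow> 'm).
      \<forall>j\<in>{1..N}. hoelder_norm \<alpha> (\<lambda>p. w_loc \<omega> w R (ps j) p - w (ps j)) < ereal \<epsilon>"
    by (auto simp: eventually_at_right[OF zero_less_one])
next
  fix w :: "'a \<Rightarrow> real" and r winf \<alpha> \<epsilon> :: real
  assume H: "r \<in> {0<..1} \<and> BC_eucl r w \<and> winf > 0 \<and>
      ((\<lambda>Rt. sup_norm (\<lambda>p. if p \<in> ball 0 Rt then 0 else w p - winf)) \<longlongrightarrow> 0) at_top"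
    and \<alpha>: "\<alpha> \<in> {0..<r}" and "0 < \<epsilon>"
  then have w: "hoelder_norm r w < \<infinity>"
    by (intro BC_eucl_imp_hoelder_norm_finite) auto
  have "\<forall>\<^sub>F R in at_right 0. \<forall>c. hoelder_norm \<alpha> (\<lambda>p. w_loc \<omega> w R c p - w c) < ereal \<epsilon>"
    using H \<alpha> w \<open>0 < \<epsilon>\<close> by (intro eventually_hoelder_norm_w_loc_less[OF om, of r w \<alpha> \<epsilon>]) auto
  then show "\<exists>R0>0. \<forall>R\<in>{0<..<R0}. \<forall>(N::nat) (ps :: nat \<Rightarrow> 'a).
      \<forall>j\<in>{1..N}. hoelder_norm \<alpha> (\<lambda>p. w_loc \<omega> w R (ps j) p - w (ps j)) < ereal \<epsilon>"
    by (auto simp: eventually_at_right[OF zero_less_one])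
  have "\<forall>\<^sub>F Rt in at_top. hoelder_norm \<alpha> (\<lambda>p. w_far \<omega> w winf Rt p - winf) < ereal \<epsilon>"
    using H \<alpha> w \<open>0 < \<epsilon>\<close> by (intro eventually_hoelder_norm_w_far_less[OF om, of r w \<alpha> \<epsilon>]) auto
  then obtain N where "\<And>Rt. N \<le> Rt \<Longrightarrow> hoelder_norm \<alpha> (\<lambda>p. w_far \<omega> w winf Rt p - winf) < ereal \<epsilon>"
    unfolding eventually_at_top_linorder by blast
  then show "\<exists>Rh>0. \<forall>Rt>Rh. hoelder_norm \<alpha> (\<lambda>p. w_far \<omega> w winf Rt p - winf) < ereal \<epsilon>"
    by (intro exI[of _ "max N 1"]) auto
qed

end
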